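(* Let $n\geq3$ and let $V$ be a finite dimensional positively graded vector space such that $V^k=0$ for $k<\frac13 n$ or $k>\frac23 n-1$. Then every graph $\Gamma\in\mathbf{HGC}_{V,n}$ with at least one vertex has cohomological degree $|\Gamma|\leq0$.
   Context: Put $V_1=\mathbb{Q}1\oplus V$ with $|1|=0$. The graphs spanning $\mathbf{HGC}_{V,n}$ are connected graphs with internal vertices (here called vertices) and hairs (edges with one free end), in which each vertex carries a (possibly empty) monomial of decorations from $V^*$ (an element $\alpha\in(V^k)^*$ having degree $-k$), each hair carries one decoration from $V_1$, and each vertex is at least trivalent where every $V^*$-decoration at it counts $+1$ to its valence (i.e. if $v$ is the number of vertices, $e$ the number of edges including hairs, $h$ the number of hairs and $u$ the number of $V^*$-decorations, then $3v+h\le 2e+u$). The cohomological degree of such a graph is $|\Gamma|=nv-(n-1)e+d+D$, where $d$ is the total degree of the $V^*$-decorations and $D$ the total degree of the hair decorations in $V_1$. (The edgeless elements and the single edge with two hair ends have no vertex.) *)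

theory Defs
  imports Main
begin

text \<open>A finite dimensional positively graded vector space V is recorded (up to isomorphism)
by its dimension function: dimV k = dim V^k. Only this data enters the degree.\<close>

definition pos_graded_fin_dim :: "(nat \<Rightarrow> nat) \<Rightarrow> bool" where
  "pos_graded_fin_dim dimV \<longleftrightarrow> dimV 0 = 0 \<and> finite {k. dimV k \<noteq> 0}"

text \<open>A (homogeneously decorated) hairy graph with vertices 0..<nverts.
 iedges: edges between two vertices; hairs: for each hair the vertex it is attached to;
 vdec i: the list of degrees k of the decorations alpha in (V^k)^* at vertex i (the monomial);
 hdec: for each hair the degree of its decoration in V_1 = Q1 + V (0 means the unit 1).\<close>

record hgraph =
  nverts :: nat
  iedges :: "(nat \<times> nat) list"
  hairs  :: "nat list"
  vdec   :: "nat \<Rightarrow> nat list"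
  hdec   :: "nat list"

definition adjacent :: "hgraph \<Rightarrow> nat \<Rightarrow> nat \<Rightarrow> bool" where
  "adjacent G i j \<longleftrightarrow> (i, j) \<in> set (iedges G) \<or> (j, i) \<in> set (iedges G)"

definition valence :: "hgraph \<Rightarrow> nat \<Rightarrow> nat" where
  "valence G i =
     length (filter (\<lambda>ed. fst ed = i) (iedges G))
   + length (filter (\<lambda>ed. snd ed = i) (iedges G))
   + length (filter (\<lambda>x. x = i) (hairs G))
   + length (vdec G i)"

definition is_HGC_graph :: "(nat \<Rightarrow> nat) \<Rightarrow> hgraph \<Rightarrow> bool" where
  "is_HGC_graph dimV G \<longleftrightarrow>
     (\<forall>ed \<in> set (iedges G). fst ed < nverts G \<and> snd ed < nverts G)
   \<and> (\<forall>x \<in> set (hairs G). x < nverts G)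
   \<and> length (hdec G) = length (hairs G)
   \<and> (\<forall>i < nverts G. \<forall>k \<in> set (vdec G i). dimV k \<noteq> 0)
   \<and> (\<forall>k \<in> set (hdec G). k = 0 \<or> dimV k \<noteq> 0)
   \<and> (\<forall>i < nverts G. \<forall>j < nverts G. (adjacent G)\<^sup>*\<^sup>* i j)
   \<and> (\<forall>i < nverts G. valence G i \<ge> 3)"

definition hgc_degree :: "nat \<Rightarrow> hgraph \<Rightarrow> int" where
  "hgc_degree n G =
     int n * int (nverts G)
   - (int n - 1) * int (length (iedges G) + length (hairs G))
   - int (\<Sum>i<nverts G. sum_list (vdec G i))
   + int (sum_list (hdec G))"

end

theory Submission
  imports Defs
begin

text \<open>Summing the valence inequality over all vertices gives \<open>3v \<le> 2e + h + u\<close>. The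
  decoration degrees satisfy \<open>3k \<ge> n\<close> at vertices and \<open>3k \<le> 2n - 3\<close> on hairs (also for
  the unit, as \<open>n \<ge> 3\<close>), so \<open>3d \<ge> n u\<close> and \<open>3D \<le> (2n - 3) h\<close>. Hence
  \<open>3|\<Gamma>| = 3nv - 3(n-1)(e+h) - 3d + 3D \<le> n(2e+h+u) - 3(n-1)(e+h) - nu + (2n-3)h = (3-n)e \<le> 0\<close>.\<close>

lemma sum_length_filter_eq_length:
  assumes "f ` set xs \<subseteq> X" and "finite X"
  shows "(\<Sum>i\<in>X. length (filter (\<lambda>x. f x = i) xs)) = length xs"
proof -
  have "length (filter (\<lambda>x. f x = i) xs) = count_list (map f xs) i" for i
    by (simp add: count_list_eq_length_filter filter_map comp_def eq_commute)
  then show ?thesis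
    using sum_count_set[of "map f xs" X] assms by simp
qed

lemma sum_valence:
  assumes "\<forall>ed \<in> set (iedges G). fst ed < nverts G \<and> snd ed < nverts G"
    and "\<forall>x \<in> set (hairs G). x < nverts G"
  shows "(\<Sum>i<nverts G. valence G i)
    = 2 * length (iedges G) + length (hairs G) + (\<Sum>i<nverts G. length (vdec G i))"
proof -
  have "fst ` set (iedges G) \<subseteq> {..<nverts G}" "snd ` set (iedges G) \<subseteq> {..<nverts G}"
    and "id ` set (hairs G) \<subseteq> {..<nverts G}"
    using assms by auto
  from this[THEN sum_length_filter_eq_length] show ?thesis
    by (simp add: valence_def sum.distrib)
qed

lemma HGC_three_nverts_le:
  assumes "is_HGC_graph dimV G"
  shows "3 * nverts G
    \<le> 2 * length (iedges G) + length (hairs G) + (\<Sum>i<nverts G. length (vdec G i))"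
proof -
  have "3 * nverts G = (\<Sum>i<nverts G. 3)"
    by simp
  also have "\<dots> \<le> (\<Sum>i<nverts G. valence G i)"
    using assms by (intro sum_mono) (simp add: is_HGC_graph_def)
  finally show ?thesis
    using assms by (simp add: is_HGC_graph_def sum_valence)
qed

lemma HGC_vertex_decoration_degree_ge:
  assumes "is_HGC_graph dimV G" and "\<forall>k. dimV k \<noteq> 0 \<longrightarrow> a \<le> c * k"
  shows "a * (\<Sum>i<nverts G. length (vdec G i)) \<le> c * (\<Sum>i<nverts G. sum_list (vdec G i))"
proof -
  have "a * length (vdec G i) \<le> c * sum_list (vdec G i)" if "i < nverts G" for i
  proof -
    have "(\<Sum>k\<leftarrow>vdec G i. a) \<le> (\<Sum>k\<leftarrow>vdec G i. c * k)"
      using assms that by (intro sum_list_mono) (auto simp: is_HGC_graph_def)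
    then show ?thesis
      unfolding sum_list_triv sum_list_const_mult by (simp add: mult_ac)
  qed
  then show ?thesis
    unfolding sum_distrib_left by (intro sum_mono) simp
qed

lemma HGC_hair_decoration_degree_le:
  assumes "is_HGC_graph dimV G" and "\<forall>k. dimV k \<noteq> 0 \<longrightarrow> c * k \<le> b"
  shows "c * sum_list (hdec G) \<le> b * length (hairs G)"
proof -
  have "(\<Sum>k\<leftarrow>hdec G. c * k) \<le> (\<Sum>k\<leftarrow>hdec G. b)"
    using assms by (intro sum_list_mono) (auto simp: is_HGC_graph_def)
  then have "c * sum_list (hdec G) \<le> b * length (hdec G)"
    unfolding sum_list_triv sum_list_const_mult by (simp add: mult_ac)
  with assms(1) show ?thesis
    by (simp add: is_HGC_graph_def)
qed

lemma HGC_three_degree_le: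
  assumes "is_HGC_graph dimV G" and "n \<ge> 3"
    and vertex_support: "\<forall>k. dimV k \<noteq> 0 \<longrightarrow> n \<le> 3 * k"
    and hair_support: "\<forall>k. dimV k \<noteq> 0 \<longrightarrow> 3 * k \<le> 2 * n - 3"
  shows "3 * hgc_degree n G \<le> (3 - int n) * int (length (iedges G))"
proof -
  define v e h where "v = nverts G" and "e = length (iedges G)" and "h = length (hairs G)"
  define u d where "u = (\<Sum>i<v. length (vdec G i))" and "d = (\<Sum>i<v. sum_list (vdec G i))"
  define D where "D = sum_list (hdec G)"
  have "3 * v \<le> 2 * e + h + u"
    using HGC_three_nverts_le[OF assms(1)] by (simp add: v_def e_def h_def u_def)
  then have valence: "int n * (3 * int v) \<le> int n * (2 * int e + int h + int u)"
    by (intro mult_left_mono) linarith+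
  have "n * u \<le> 3 * d"
    using HGC_vertex_decoration_degree_ge[OF assms(1) vertex_support]
    by (simp add: v_def u_def d_def)
  then have vertex_decorations: "int n * int u \<le> 3 * int d"
    by (simp flip: of_nat_mult)
  have "3 * D \<le> (2 * n - 3) * h"
    using HGC_hair_decoration_degree_le[OF assms(1) hair_support] by (simp add: D_def h_def)
  then have "int (3 * D) \<le> int ((2 * n - 3) * h)"
    by (simp only: of_nat_le_iff)
  then have hair_decorations: "3 * int D \<le> (2 * int n - 3) * int h"
    using assms(2) by simp
  have "hgc_degree n G = int n * int v - (int n - 1) * (int e + int h) - int d + int D"
    by (simp add: hgc_degree_def v_def e_def h_def d_def D_def)
  with valence vertex_decorations hair_decorations show ?thesis
    by (simp add: e_def algebra_simps)
qed

theorem lemma13p2: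
  fixes n :: nat and dimV :: "nat \<Rightarrow> nat" and G :: hgraph
  assumes "n \<ge> 3"
    and "pos_graded_fin_dim dimV"
    and "\<forall>k. (3 * int k < int n \<or> 3 * int k > 2 * int n - 3) \<longrightarrow> dimV k = 0"
    and "is_HGC_graph dimV G"
    and "nverts G \<ge> 1"
  shows "hgc_degree n G \<le> 0"
proof -
  have "n \<le> 3 * k" and "3 * k \<le> 2 * n - 3" if "dimV k \<noteq> 0" for k
  proof -
    from that assms(3) have "\<not> 3 * int k < int n" and "\<not> 3 * int k > 2 * int n - 3"
      by auto
    then show "n \<le> 3 * k" and "3 * k \<le> 2 * n - 3"
      by linarith+
  qed
  then have "3 * hgc_degree n G \<le> (3 - int n) * int (length (iedges G))"
    using HGC_three_degree_le[OF assms(4,1)] by blast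
  then show ?thesis
    using assms(1) mult_nonpos_nonneg[of "3 - int n" "int (length (iedges G))"] by linarith
qed

end
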